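(* Let $n,m_1,m_2\ge1$ be integers, $r>0$, $D\subseteq\mathbb{R}^{m_1}$ a compact set, $U\subseteq\mathbb{R}^{m_2}$ a locally compact set with $0\in U$, and $W=D\times U$. Let $f:L^\infty([-r,0);\mathbb{R}^n)\times L^\infty([-r,0];D)\times L^\infty([-r,0];U)\to\mathbb{R}^n$ (written $f(x,d,u)$, with $w=(d,u)$) satisfy: (H1) there exist non-decreasing functions $a,M,N:\mathbb{R}_+\to\mathbb{R}_+$ such that for every $R>0$ and all $x,y\in L^\infty([-r,0);\mathbb{R}^n)$, $w\in L^\infty([-r,0];W)$ with $\|x\|,\|y\|,\|w\|\le R$: $|f(x,w)-f(y,w)|\le N(R)h\sup_{-h\le s<0}|x(s)-y(s)|+M(R)\sup_{-r\le s<-h}|x(s)-y(s)|$ for all $h\in(0,r)$, and $|f(x,w)|\le a(R)$; (H2) for every $\delta>0$, $x\in L^\infty([-r,\delta);\mathbb{R}^n)$, $w\in L^\infty([-r,\delta];W)$, the function $z$ on $[-r,\delta)$ defined by $z(t)=x(t)$ for a.e. $t\in[-r,0)$ and $z(t)=f(x_t,w_t)$ for a.e. $t\in[0,\delta)$ belongs to $L^\infty([-r,\delta);\mathbb{R}^n)$; (H3) there exists $b\in K_\infty$ such that $|f(x,d,u)|\le b\left(\max\left(\|x\|,\sup_{-r\le s\le0}|u(s)|\right)\right)$ for all $x\in L^\infty([-r,0);\mathbb{R}^n)$, $d\in L^\infty([-r,0];D)$, $u\in L^\infty([-r,0];U)$. Then $0\in L^\infty([-r,0);\mathbb{R}^n)$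 is a robust equilibrium point for the system $x(t)=f(x_t,d_t,u_t)$ with input $u$, i.e., for all $\varepsilon>0$ and $T\ge0$ there exists $\delta=\delta(\varepsilon,T)>0$ such that for every $x_0\in L^\infty([-r,0);\mathbb{R}^n)$, $d\in L^\infty([-r,+\infty);D)$, $u\in L^\infty_{loc}([-r,+\infty);U)$ with $\|x_0\|+\sup_{t\ge0}\|u_t\|<\delta$, there exist $t_{\max}=t_{\max}(x_0,d,u)\in(T,+\infty]$ and a unique mapping $x\in L^\infty_{loc}([-r,t_{\max});\mathbb{R}^n)$ satisfying $x(t)=f(x_t,d_t,u_t)$ for a.e. $t\in[0,t_{\max})$, $x(t)=x_0(t)$ for a.e. $t\in[-r,0)$, and $\|x_t\|<\varepsilon$ for all $t\in[0,T]$.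
   Context: $\mathbb{R}_+=[0,+\infty)$. $L^\infty(I;S)$: measurable essentially bounded functions on the interval $I$ with values in $S$; $L^\infty_{loc}$: essentially bounded on compact subintervals. For $x\in L^\infty(I;\mathbb{R}^k)$, $\|x\|$ is the essential supremum of the Euclidean norm $|x|$, and $\sup_{a\le s<b}|x(s)|$ means essential supremum over $[a,b)$. For $x$ defined on $[-r,T)$ and $t\in[0,T)$, $x_t(s)=x(t+s)$ for $s\in[-r,0)$; for inputs defined on $[-r,+\infty)$, $d_t(s)=d(t+s)$, $u_t(s)=u(t+s)$, $s\in[-r,0]$. $K_\infty$ is the class of continuous strictly increasing functions $b:\mathbb{R}_+\to\mathbb{R}_+$ with $b(0)=0$ and $b(s)\to\infty$ as $s\to\infty$. *)

theory Defs
  imports "HOL-Analysis.Analysis" "HOL-Probability.Essential_Supremum"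
begin

definition ess_norm :: "real set \<Rightarrow> (real \<Rightarrow> 'a::real_normed_vector) \<Rightarrow> ereal" where
  "ess_norm I g = esssup (lebesgue_on I) (\<lambda>t. ereal (norm (g t)))"

definition Linf :: "real set \<Rightarrow> 'a::euclidean_space set \<Rightarrow> (real \<Rightarrow> 'a) \<Rightarrow> bool" where
  "Linf I S g \<longleftrightarrow> g \<in> borel_measurable (lebesgue_on I)
      \<and> (AE t in lebesgue_on I. g t \<in> S) \<and> ess_norm I g < \<infinity>"

definition Linf_loc :: "real set \<Rightarrow> 'a::euclidean_space set \<Rightarrow> (real \<Rightarrow> 'a) \<Rightarrow> bool" where
  "Linf_loc I S g \<longleftrightarrow> g \<in> borel_measurable (lebesgue_on I)
      \<and> (AE t in lebesgue_on I. g t \<in> S)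
      \<and> (\<forall>a b. {a..b} \<subseteq> I \<longrightarrow> ess_norm {a..b} g < \<infinity>)"

definition ae_eq :: "real set \<Rightarrow> (real \<Rightarrow> 'a) \<Rightarrow> (real \<Rightarrow> 'a) \<Rightarrow> bool" where
  "ae_eq I g h \<longleftrightarrow> (AE t in lebesgue_on I. g t = h t)"

definition shift :: "(real \<Rightarrow> 'a) \<Rightarrow> real \<Rightarrow> real \<Rightarrow> 'a" where
  "shift g t = (\<lambda>s. g (t + s))"

definition K_inf :: "(real \<Rightarrow> real) \<Rightarrow> bool" where
  "K_inf b \<longleftrightarrow> continuous_on {0..} b \<and> strict_mono_on {0..} b \<and> b 0 = 0
      \<and> filterlim b at_top at_top"

end

theory Submission
  imports Defs
begin

text \<open>On \<open>[-r, S)\<close> let \<open>G\<close> send \<open>g\<close> to the function equal to \<open>x0\<close> on \<open>[-r, 0)\<close> and to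
  \<open>f\<close> of the history of \<open>g\<close>, retracted onto the ball of radius \<open>\<rho>\<close>, on \<open>[0, S)\<close>.
  By (H1), with a small window \<open>h\<close> for the recent past and a large exponent \<open>l\<close>, \<open>G\<close> halves the
  weighted norm \<open>sup |g \<tau>| exp (- l \<tau>)\<close>, so Picard iteration converges to a fixed point.
  Comparing the fixed point with the zero history and using (H3) with \<open>b 0 = 0\<close> bounds it by
  \<open>2 ((N h + M) \<delta> + b \<delta>) exp (l S)\<close>, which is below \<open>\<rho>\<close> for small \<open>\<delta>\<close>; hence the
  retraction is inactive and the fixed point solves the system. Uniqueness follows from the same
  halving estimate on every \<open>[-r, B)\<close> with \<open>B < S\<close>, where any two solutions are bounded.\<close>

section \<open>Almost everywhere on subsets of the real line\<close>

lemma AE_lebesgue_on_iff_negligible: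
  assumes "S \<in> sets lebesgue"
  shows "(AE x in lebesgue_on S. P x) \<longleftrightarrow> (\<exists>N. negligible N \<and> (\<forall>x\<in>S. x \<notin> N \<longrightarrow> P x))"
proof -
  have "(AE x in lebesgue_on S. P x) \<longleftrightarrow> (AE x in lebesgue. x \<in> S \<longrightarrow> P x)"
    using assms by (subst AE_restrict_space_iff) auto
  also have "\<dots> \<longleftrightarrow> (\<exists>N\<in>null_sets lebesgue. {x. \<not> (x \<in> S \<longrightarrow> P x)} \<subseteq> N)"
    unfolding eventually_ae_filter by simp
  finally show ?thesis
    by (auto simp: negligible_iff_null_sets)
qed

lemma AE_lebesgue_on_translate:
  fixes A B :: "real set"
  assumes "A \<in> sets lebesgue" "B \<in> sets lebesgue" "AE x in lebesgue_on A. Q x"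
  shows "AE s in lebesgue_on B. t + s \<in> A \<longrightarrow> Q (t + s)"
proof -
  obtain N where N: "negligible N" "\<forall>x\<in>A. x \<notin> N \<longrightarrow> Q x"
    using assms(3) AE_lebesgue_on_iff_negligible[OF assms(1)] by blast
  have "negligible ((+) (-t) ` N)"
    using N(1) negligible_translation by blast
  moreover have "\<forall>s\<in>B. s \<notin> (+) (-t) ` N \<longrightarrow> t + s \<in> A \<longrightarrow> Q (t + s)"
    using N(2) by (metis add_minus_cancel image_eqI)
  ultimately show ?thesis
    using AE_lebesgue_on_iff_negligible[OF assms(2)] by blast
qed

lemma AE_lebesgue_on_restrict:
  assumes "A \<in> sets lebesgue" "B \<in> sets lebesgue" "AE x in lebesgue_on B. P x"
  shows "AE x in lebesgue_on A. x \<in> B \<longrightarrow> P x"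
proof -
  obtain N where "negligible N" "\<forall>x\<in>B. x \<notin> N \<longrightarrow> P x"
    using assms(3) AE_lebesgue_on_iff_negligible[OF assms(2)] by blast
  then show ?thesis
    using AE_lebesgue_on_iff_negligible[OF assms(1)] by blast
qed

lemma AE_lebesgue_on_subset:
  assumes "A \<in> sets lebesgue" "B \<in> sets lebesgue" "AE x in lebesgue_on A. P x" "B \<subseteq> A"
  shows "AE x in lebesgue_on B. P x"
proof -
  obtain N where "negligible N" "\<forall>x\<in>A. x \<notin> N \<longrightarrow> P x"
    using assms(3) AE_lebesgue_on_iff_negligible[OF assms(1)] by blast
  then show ?thesis
    using AE_lebesgue_on_iff_negligible[OF assms(2)] assms(4) by blast
qed

lemma AE_lebesgue_on_mem: "AE x in lebesgue_on A. x \<in> A"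
  by (rule AE_I2) auto

lemma AE_lebesgue_on_Ico_split:
  fixes a b c :: real
  assumes "AE \<tau> in lebesgue_on {a..<b}. \<tau> < c \<longrightarrow> P \<tau>" and "AE \<tau> in lebesgue_on {c..<b}. P \<tau>"
  shows "AE \<tau> in lebesgue_on {a..<b}. P \<tau>"
proof -
  have "AE \<tau> in lebesgue_on {a..<b}. \<tau> \<in> {c..<b} \<longrightarrow> P \<tau>"
    by (rule AE_lebesgue_on_restrict[OF _ _ assms(2)]) auto
  then show ?thesis
    using assms(1) AE_lebesgue_on_mem
  proof eventually_elim
    case (elim \<tau>)
    then show ?case
      by (cases "\<tau> < c") auto
  qed
qed

lemma borel_measurable_lebesgue_on_translate:
  fixes g :: "real \<Rightarrow> 'a::euclidean_space"
  assumes "A \<in> sets lebesgue" "g \<in> borel_measurable (lebesgue_on A)"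
    and "\<And>s. s \<in> B \<Longrightarrow> t + s \<in> A"
  shows "(\<lambda>s. g (t + s)) \<in> borel_measurable (lebesgue_on B)"
proof -
  let ?g = "\<lambda>x. if x \<in> A then g x else 0"
  have "?g \<in> borel_measurable lebesgue"
    using borel_measurable_if assms(1,2) by blast
  moreover have "(\<lambda>s::real. t + s) \<in> lebesgue \<rightarrow>\<^sub>M lebesgue"
    using lebesgue_affine_measurable[where c="\<lambda>_. 1" and t=t] by simp
  ultimately have "(\<lambda>s. ?g (t + s)) \<in> borel_measurable lebesgue"
    by (rule measurable_compose[rotated])
  then have "(\<lambda>s. ?g (t + s)) \<in> borel_measurable (lebesgue_on B)"
    by (simp add: measurable_restrict_space1)
  then show ?thesis
    by (rule measurable_cong[THEN iffD1, rotated]) (use assms(3) in auto)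
qed

lemma ess_norm_le_ereal:
  fixes g :: "real \<Rightarrow> 'a::real_normed_vector"
  assumes "g \<in> borel_measurable (lebesgue_on I)" "AE t in lebesgue_on I. norm (g t) \<le> c"
  shows "ess_norm I g \<le> ereal c"
  unfolding ess_norm_def by (rule esssup_I) (use assms in auto)

lemma AE_norm_le_if_ess_norm_le:
  assumes "ess_norm I g \<le> ereal c"
  shows "AE t in lebesgue_on I. norm (g t) \<le> c"
proof -
  have "AE t in lebesgue_on I. ereal (norm (g t)) \<le> ess_norm I g"
    unfolding ess_norm_def by (rule esssup_AE)
  then show ?thesis
    by eventually_elim (use assms in \<open>auto dest: order.trans\<close>)
qed

lemma ess_norm_finite_imp_bound:
  assumes "ess_norm I g < \<infinity>"
  obtains c where "c \<ge> 0" "AE t in lebesgue_on I. norm (g t) \<le> c"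
proof -
  let ?c = "max 0 (real_of_ereal (ess_norm I g))"
  have "ess_norm I g \<le> ereal ?c"
    using assms by (cases "ess_norm I g") auto
  then have "AE t in lebesgue_on I. norm (g t) \<le> ?c"
    by (rule AE_norm_le_if_ess_norm_le)
  then show ?thesis
    by (rule that[rotated]) simp
qed

lemma ess_norm_nonneg:
  assumes "I \<in> sets lebesgue" "emeasure lebesgue I \<noteq> 0"
  shows "0 \<le> ess_norm I g"
proof -
  have "esssup (lebesgue_on I) (\<lambda>t. ereal 0) \<le> esssup (lebesgue_on I) (\<lambda>t. ereal (norm (g t)))"
    by (rule esssup_mono) auto
  moreover have "esssup (lebesgue_on I) (\<lambda>t. ereal 0) = 0"
    using assms by (subst esssup_const) (auto simp: emeasure_restrict_space)
  ultimately show ?thesis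
    unfolding ess_norm_def by simp
qed

lemma Linf_if_AE_bounded:
  fixes g :: "real \<Rightarrow> 'a::euclidean_space"
  assumes "g \<in> borel_measurable (lebesgue_on I)" "AE t in lebesgue_on I. g t \<in> S"
    and "AE t in lebesgue_on I. norm (g t) \<le> c"
  shows "Linf I S g"
proof -
  have "ess_norm I g \<le> ereal c"
    by (rule ess_norm_le_ereal[OF assms(1,3)])
  then have "ess_norm I g < \<infinity>"
    by (cases "ess_norm I g") auto
  then show ?thesis
    using assms(1,2) unfolding Linf_def by blast
qed


section \<open>Retraction onto a closed ball\<close>

definition ball_retract :: "real \<Rightarrow> 'a::euclidean_space \<Rightarrow> 'a" where
  "ball_retract \<rho> = closest_point (cball 0 \<rho>)"

lemma norm_ball_retract_le: "\<rho> \<ge> 0 \<Longrightarrow> norm (ball_retract \<rho> v) \<le> \<rho>"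
  unfolding ball_retract_def using closest_point_in_set[of "cball 0 \<rho>" v] by auto

lemma ball_retract_lipschitz:
  "\<rho> \<ge> 0 \<Longrightarrow> norm (ball_retract \<rho> v - ball_retract \<rho> w) \<le> norm (v - w)"
  unfolding ball_retract_def using closest_point_lipschitz[of "cball 0 \<rho>" v w]
  by (auto simp: dist_norm)

lemma ball_retract_id: "norm v \<le> \<rho> \<Longrightarrow> ball_retract \<rho> v = v"
  unfolding ball_retract_def by (rule closest_point_self) auto

lemma norm_ball_retract_le_norm:
  fixes v :: "'a::euclidean_space"
  shows "\<rho> \<ge> 0 \<Longrightarrow> norm (ball_retract \<rho> v) \<le> norm v"
  using ball_retract_lipschitz[of \<rho> v 0] ball_retract_id[of "0::'a" \<rho>] by auto

lemma ball_retract_idem: "\<rho> \<ge> 0 \<Longrightarrow> ball_retract \<rho> (ball_retract \<rho> v) = ball_retract \<rho> v"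
  using ball_retract_id norm_ball_retract_le by blast

lemma borel_measurable_ball_retract:
  assumes "\<rho> \<ge> 0" "g \<in> borel_measurable M"
  shows "(\<lambda>t. ball_retract \<rho> (g t)) \<in> borel_measurable M"
proof -
  have "ball_retract \<rho> \<in> borel_measurable borel"
    unfolding ball_retract_def
    by (intro borel_measurable_continuous_onI continuous_on_closest_point) (use assms in auto)
  then show ?thesis
    using assms(2) measurable_compose by blast
qed

section \<open>Geometric estimates\<close>

lemma nonpos_if_le_div_power2:
  fixes z C :: real
  assumes "\<And>k::nat. z \<le> C / 2 ^ k"
  shows "z \<le> 0"
proof -
  have "(\<lambda>k. C * (1/2) ^ k) \<longlonglongrightarrow> C * 0"
    by (intro tendsto_mult tendsto_const LIMSEQ_power_zero) auto
  moreover have "\<forall>k. z \<le> C * (1/2) ^ k"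
    using assms by (simp add: power_one_over)
  ultimately show ?thesis
    by (metis LIMSEQ_le_const mult_zero_right)
qed

lemma AE_le_by_halving:
  fixes g w :: "'b \<Rightarrow> real"
  assumes step: "\<And>c. c \<ge> 0 \<Longrightarrow> AE t in M. g t \<le> c * w t \<Longrightarrow> AE t in M. g t \<le> (c / 2 + \<beta>) * w t"
    and init: "AE t in M. g t \<le> C * w t" and "C \<ge> 0" "\<beta> \<ge> 0"
    and w: "\<And>t. w t \<ge> 0"
  shows "AE t in M. g t \<le> 2 * \<beta> * w t"
proof -
  have iter: "AE t in M. g t \<le> (C / 2 ^ k + 2 * \<beta>) * w t" for k :: nat
  proof (induction k)
    case 0
    show ?case using init
      by eventually_elim (rule order.trans, assumption, use w \<open>\<beta> \<ge> 0\<close> in \<open>auto intro!: mult_right_mono\<close>)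
  next
    case (Suc k)
    have "AE t in M. g t \<le> ((C / 2 ^ k + 2 * \<beta>) / 2 + \<beta>) * w t"
      by (rule step[OF _ Suc]) (use \<open>C \<ge> 0\<close> \<open>\<beta> \<ge> 0\<close> in auto)
    moreover have "(C / 2 ^ k + 2 * \<beta>) / 2 + \<beta> = C / 2 ^ Suc k + 2 * \<beta>"
      by (simp add: field_simps)
    ultimately show ?case by simp
  qed
  have "AE t in M. \<forall>k::nat. g t \<le> (C / 2 ^ k + 2 * \<beta>) * w t"
    using iter by (simp add: AE_all_countable)
  then show ?thesis
  proof eventually_elim
    case (elim t)
    have "g t - 2 * \<beta> * w t \<le> (C * w t) / 2 ^ k" for k :: nat
      using elim[rule_format, of k] by (simp add: field_simps)
    then have "g t - 2 * \<beta> * w t \<le> 0"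
      by (rule nonpos_if_le_div_power2)
    then show ?case
      by simp
  qed
qed

lemma convergent_and_dist_lim_le_if_geometric_increments:
  fixes z :: "nat \<Rightarrow> 'a::banach"
  assumes incr: "\<And>k. norm (z (Suc k) - z k) \<le> C / 2 ^ k"
  shows "convergent z" "\<And>k. norm (lim z - z k) \<le> 2 * C / 2 ^ k"
proof -
  have "norm (z (Suc 0) - z 0) \<le> C"
    using incr[of 0] by simp
  then have "C \<ge> 0"
    using norm_ge_zero order.trans by blast
  have "summable (\<lambda>k. C * (1/2) ^ k)"
    by (intro summable_mult summable_geometric) auto
  then have "summable (\<lambda>k. z (Suc k) - z k)"
    by (rule summable_comparison_test[rotated]) (use incr in \<open>auto simp: power_one_over\<close>)
  then have "(\<lambda>m. z 0 + (\<Sum>k<m. z (Suc k) - z k)) \<longlonglongrightarrow> z 0 + (\<Sum>k. z (Suc k) - z k)"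
    by (intro tendsto_add tendsto_const summable_LIMSEQ)
  moreover have "(\<lambda>m. z 0 + (\<Sum>k<m. z (Suc k) - z k)) = z"
    by (rule ext) (simp add: sum_lessThan_telescope)
  ultimately show conv: "convergent z"
    by (auto simp: convergent_def)
  fix k
  have partial: "norm (z (k + m) - z k) \<le> 2 * C / 2 ^ k - 2 * C / 2 ^ (k + m)" for m
  proof (induction m)
    case (Suc m)
    have "norm (z (k + Suc m) - z k) \<le> norm (z (k + m) - z k) + norm (z (Suc (k + m)) - z (k + m))"
      using norm_triangle_ineq[of "z (k + m) - z k" "z (Suc (k + m)) - z (k + m)"] by simp
    also have "\<dots> \<le> 2 * C / 2 ^ k - 2 * C / 2 ^ (k + m) + C / 2 ^ (k + m)"
      using Suc incr[of "k + m"] by simp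
    also have "\<dots> = 2 * C / 2 ^ k - 2 * C / 2 ^ (k + Suc m)"
      by (simp add: field_simps)
    finally show ?case .
  qed simp
  have "(\<lambda>m. norm (z m - z k)) \<longlonglongrightarrow> norm (lim z - z k)"
    using conv by (intro tendsto_norm tendsto_diff tendsto_const) (simp add: convergent_LIMSEQ_iff)
  moreover have "\<forall>m\<ge>k. norm (z m - z k) \<le> 2 * C / 2 ^ k"
  proof (intro allI impI)
    fix m assume "k \<le> m"
    then obtain j where "m = k + j"
      using le_Suc_ex by blast
    then show "norm (z m - z k) \<le> 2 * C / 2 ^ k"
      using partial[of j] \<open>C \<ge> 0\<close> by (smt (verit) divide_nonneg_pos zero_less_power)
  qed
  ultimately show "norm (lim z - z k) \<le> 2 * C / 2 ^ k"
    by (intro LIMSEQ_le_const2) auto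
qed

lemma AE_shift_exp_bound:
  fixes g :: "real \<Rightarrow> 'a::euclidean_space"
  assumes "A \<in> sets lebesgue"
    and bound: "AE \<tau> in lebesgue_on A. norm (g \<tau>) \<le> e + c * exp (l * \<tau>)"
    and "c \<ge> 0" "l \<ge> 0" and window: "\<forall>s\<in>{p..<q}. t + s \<in> A"
  shows "AE s in lebesgue_on {p..<q}. norm (g (t + s)) \<le> e + c * exp (l * (t + q))"
proof -
  have "AE s in lebesgue_on {p..<q}. t + s \<in> A \<longrightarrow> norm (g (t + s)) \<le> e + c * exp (l * (t + s))"
    by (rule AE_lebesgue_on_translate[OF assms(1) _ bound]) auto
  then show ?thesis
    using AE_lebesgue_on_mem
  proof eventually_elim
    case (elim s)
    then have "exp (l * (t + s)) \<le> exp (l * (t + q))"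
      using \<open>l \<ge> 0\<close> by (auto intro: mult_left_mono)
    then have "c * exp (l * (t + s)) \<le> c * exp (l * (t + q))"
      using \<open>c \<ge> 0\<close> by (rule mult_left_mono)
    then show ?case
      using elim window by fastforce
  qed
qed

section \<open>Solutions of the delay system\<close>

definition delay_solution ::
    "real \<Rightarrow> ((real \<Rightarrow> 'a::euclidean_space) \<Rightarrow> (real \<Rightarrow> 'b) \<Rightarrow> (real \<Rightarrow> 'c) \<Rightarrow> 'a) \<Rightarrow>
     (real \<Rightarrow> 'b) \<Rightarrow> (real \<Rightarrow> 'c) \<Rightarrow> (real \<Rightarrow> 'a) \<Rightarrow> ereal \<Rightarrow> (real \<Rightarrow> 'a) \<Rightarrow> bool" where
  "delay_solution r f d u x0 tmax x \<longleftrightarrow>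
     Linf_loc {t. -r \<le> t \<and> ereal t < tmax} UNIV x \<and>
     (AE t in lebesgue_on {t. 0 \<le> t \<and> ereal t < tmax}. x t = f (shift x t) (shift d t) (shift u t)) \<and>
     ae_eq {-r..<0} x x0"

definition robust_equilibrium_zero ::
    "real \<Rightarrow> 'b::euclidean_space set \<Rightarrow> 'c::euclidean_space set \<Rightarrow>
     ((real \<Rightarrow> 'a::euclidean_space) \<Rightarrow> (real \<Rightarrow> 'b) \<Rightarrow> (real \<Rightarrow> 'c) \<Rightarrow> 'a) \<Rightarrow> bool" where
  "robust_equilibrium_zero r D U f \<longleftrightarrow>
     (\<forall>\<epsilon>>0. \<forall>T\<ge>0. \<exists>\<delta>>0. \<forall>x0 d u.
        Linf {-r..<0} UNIV x0 \<and> Linf {-r..} D d \<and> Linf_loc {-r..} U u \<and>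
        ess_norm {-r..<0} x0 + (SUP t\<in>{0..}. ess_norm {-r..0} (shift u t)) < ereal \<delta> \<longrightarrow>
        (\<exists>tmax>ereal T. \<exists>x. delay_solution r f d u x0 tmax x \<and>
           (\<forall>t\<in>{0..T}. ess_norm {-r..<0} (shift x t) < ereal \<epsilon>) \<and>
           (\<forall>y. delay_solution r f d u x0 tmax y \<longrightarrow> ae_eq {t. -r \<le> t \<and> ereal t < tmax} y x)))"

lemma Collect_ereal_less_eq: "{t. a \<le> t \<and> ereal t < ereal S} = {a..<S}"
  by auto

lemma delay_solution_ereal_iff:
  "delay_solution r f d u x0 (ereal S) x \<longleftrightarrow>
     Linf_loc {-r..<S} UNIV x \<and>
     (AE t in lebesgue_on {0..<S}. x t = f (shift x t) (shift d t) (shift u t)) \<and>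
     ae_eq {-r..<0} x x0"
  unfolding delay_solution_def Collect_ereal_less_eq ..

locale delay_system =
  fixes r :: real and D :: "(real ^ 'm1) set" and U :: "(real ^ 'm2) set"
    and f :: "(real \<Rightarrow> real ^ 'n) \<Rightarrow> (real \<Rightarrow> real ^ 'm1) \<Rightarrow> (real \<Rightarrow> real ^ 'm2) \<Rightarrow> real ^ 'n"
    and a M N b :: "real \<Rightarrow> real"
  assumes r_pos: "r > 0"
    and D_bounded: "bounded D"
    and f_welldef: "\<And>x x' d d' u u'.
        Linf {-r..<0} UNIV x \<Longrightarrow> Linf {-r..<0} UNIV x' \<Longrightarrow>
        Linf {-r..0} D d \<Longrightarrow> Linf {-r..0} D d' \<Longrightarrow>
        Linf {-r..0} U u \<Longrightarrow> Linf {-r..0} U u' \<Longrightarrow>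
        ae_eq {-r..<0} x x' \<Longrightarrow> ae_eq {-r..0} d d' \<Longrightarrow> ae_eq {-r..0} u u' \<Longrightarrow>
        f x d u = f x' d' u'"
    and aMN_nonneg: "\<forall>s\<ge>0. a s \<ge> 0 \<and> M s \<ge> 0 \<and> N s \<ge> 0"
    and H1: "\<forall>R>0. \<forall>x y d u.
          Linf {-r..<0} UNIV x \<and> Linf {-r..<0} UNIV y \<and> Linf {-r..0} D d \<and> Linf {-r..0} U u \<and>
          ess_norm {-r..<0} x \<le> ereal R \<and> ess_norm {-r..<0} y \<le> ereal R \<and>
          ess_norm {-r..0} (\<lambda>s. (d s, u s)) \<le> ereal R \<longrightarrow>
            (\<forall>h. 0 < h \<and> h < r \<longrightarrow>
               ereal (norm (f x d u - f y d u))
                 \<le> ereal (N R * h) * ess_norm {-h..<0} (\<lambda>s. x s - y s)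
                   + ereal (M R) * ess_norm {-r..<-h} (\<lambda>s. x s - y s)) \<and>
            norm (f x d u) \<le> a R"
    and H2: "\<And>\<delta> x d u. \<delta> > 0 \<Longrightarrow> Linf {-r..<\<delta>} UNIV x \<Longrightarrow>
        Linf {-r..\<delta>} D d \<Longrightarrow> Linf {-r..\<delta>} U u \<Longrightarrow>
        Linf {-r..<\<delta>} UNIV
          (\<lambda>t. if t < 0 then x t else f (shift x t) (shift d t) (shift u t))"
    and b_K_inf: "K_inf b"
    and H3: "\<forall>x d u. Linf {-r..<0} UNIV x \<and> Linf {-r..0} D d \<and> Linf {-r..0} U u \<longrightarrow>
           norm (f x d u)
             \<le> b (real_of_ereal (max (ess_norm {-r..<0} x) (ess_norm {-r..0} u)))"
begin

lemma f_lipschitz: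
  assumes "R > 0" "0 < h" "h < r"
    and x: "Linf {-r..<0} UNIV x" and y: "Linf {-r..<0} UNIV y"
    and d: "Linf {-r..0} D d" and u: "Linf {-r..0} U u"
    and x_le: "AE s in lebesgue_on {-r..<0}. norm (x s) \<le> R"
    and y_le: "AE s in lebesgue_on {-r..<0}. norm (y s) \<le> R"
    and du_le: "AE s in lebesgue_on {-r..0}. norm (d s, u s) \<le> R"
    and recent: "AE s in lebesgue_on {-h..<0}. norm (x s - y s) \<le> c1"
    and past: "AE s in lebesgue_on {-r..<-h}. norm (x s - y s) \<le> c2"
  shows "norm (f x d u - f y d u) \<le> N R * h * c1 + M R * c2"
    and "norm (f x d u) \<le> a R"
proof -
  have xm: "x \<in> borel_measurable (lebesgue_on {-r..<0})"
    and ym: "y \<in> borel_measurable (lebesgue_on {-r..<0})"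
    and dm: "d \<in> borel_measurable (lebesgue_on {-r..0})"
    and um: "u \<in> borel_measurable (lebesgue_on {-r..0})"
    using x y d u by (simp_all add: Linf_def)
  have "(\<lambda>s. x s - y s) \<in> borel_measurable (lebesgue_on {-r..<0})"
    using xm ym by measurable
  then have "(\<lambda>s. x s - y s) \<in> borel_measurable (lebesgue_on {-h..<0})"
    and "(\<lambda>s. x s - y s) \<in> borel_measurable (lebesgue_on {-r..<-h})"
    by (rule measurable_restrict_mono; use assms(2,3) in auto)+
  then have e1: "ess_norm {-h..<0} (\<lambda>s. x s - y s) \<le> ereal c1"
    and e2: "ess_norm {-r..<-h} (\<lambda>s. x s - y s) \<le> ereal c2"
    using recent past by (simp_all add: ess_norm_le_ereal)
  have "(\<lambda>s. (d s, u s)) \<in> borel_measurable (lebesgue_on {-r..0})"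
    using dm um by measurable
  then have H: "(\<forall>h. 0 < h \<and> h < r \<longrightarrow>
               ereal (norm (f x d u - f y d u))
                 \<le> ereal (N R * h) * ess_norm {-h..<0} (\<lambda>s. x s - y s)
                   + ereal (M R) * ess_norm {-r..<-h} (\<lambda>s. x s - y s)) \<and>
            norm (f x d u) \<le> a R"
    using H1 \<open>R > 0\<close> x y d u ess_norm_le_ereal[OF xm x_le] ess_norm_le_ereal[OF ym y_le]
      ess_norm_le_ereal[OF _ du_le] by blast
  then show "norm (f x d u) \<le> a R"
    by blast
  have "N R \<ge> 0" "M R \<ge> 0"
    using aMN_nonneg \<open>R > 0\<close> by auto
  then have "ereal (N R * h) * ess_norm {-h..<0} (\<lambda>s. x s - y s)
               + ereal (M R) * ess_norm {-r..<-h} (\<lambda>s. x s - y s)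
             \<le> ereal (N R * h) * ereal c1 + ereal (M R) * ereal c2"
    using e1 e2 \<open>h > 0\<close> by (intro add_mono ereal_mult_left_mono) auto
  then have "ereal (norm (f x d u - f y d u)) \<le> ereal (N R * h) * ereal c1 + ereal (M R) * ereal c2"
    using H \<open>0 < h\<close> \<open>h < r\<close> by (blast intro: order.trans)
  then show "norm (f x d u - f y d u) \<le> N R * h * c1 + M R * c2"
    by simp
qed

lemma Linf_shift:
  fixes g :: "real \<Rightarrow> 'a::euclidean_space"
  assumes "g \<in> borel_measurable (lebesgue_on {-r..<B})"
    and bound: "AE \<tau> in lebesgue_on {-r..<B}. norm (g \<tau>) \<le> R"
    and "0 \<le> t" "t < B"
  shows "Linf {-r..<0} UNIV (shift g t)"
    and "AE s in lebesgue_on {-r..<0}. norm (shift g t s) \<le> R"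
proof -
  have window: "\<And>s. s \<in> {-r..<0} \<Longrightarrow> t + s \<in> {-r..<B}"
    using assms(3,4) by auto
  have m: "shift g t \<in> borel_measurable (lebesgue_on {-r..<0})"
    unfolding shift_def
    by (rule borel_measurable_lebesgue_on_translate[OF _ assms(1)]) (use window in auto)
  have "AE s in lebesgue_on {-r..<0}. t + s \<in> {-r..<B} \<longrightarrow> norm (g (t + s)) \<le> R"
    by (rule AE_lebesgue_on_translate[OF _ _ bound]) auto
  then show b: "AE s in lebesgue_on {-r..<0}. norm (shift g t s) \<le> R"
    using AE_lebesgue_on_mem by eventually_elim (use window in \<open>auto simp: shift_def\<close>)
  show "Linf {-r..<0} UNIV (shift g t)"
    by (rule Linf_if_AE_bounded[OF m _ b]) simp
qed

text \<open>With these parameters the step \<open>g \<mapsto> f (shift g t) \<dots>\<close> halves the weighted norm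
  \<open>sup |g \<tau>| exp (- l \<tau>)\<close>: \<open>N R h\<close> controls the recent past, \<open>M R exp (- l h)\<close> the delayed part.\<close>

lemma contraction_params:
  assumes "R > 0"
  obtains h l where "0 < h" "h < r" "N R * h \<le> 1/4" "l \<ge> 0" "M R * exp (- (l * h)) \<le> 1/4"
proof -
  have NM: "N R \<ge> 0" "M R \<ge> 0"
    using aMN_nonneg assms by auto
  define h where "h = min (r/2) (1 / (4 * (N R + 1)))"
  define l where "l = ln (4 * M R + 1) / h"
  have h: "0 < h" "h < r"
    using r_pos NM by (auto simp: h_def)
  have "N R * h \<le> N R * (1 / (4 * (N R + 1)))"
    using NM by (intro mult_left_mono) (auto simp: h_def)
  also have "\<dots> \<le> 1/4"
    using NM by (simp add: field_simps)
  finally have Nh: "N R * h \<le> 1/4" .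
  have "exp (- (l * h)) = 1 / (4 * M R + 1)"
    using h NM by (simp add: l_def exp_minus field_simps)
  then have "M R * exp (- (l * h)) = M R / (4 * M R + 1)"
    by simp
  also have "\<dots> \<le> 1/4"
    using NM by (simp add: field_simps)
  finally have "M R * exp (- (l * h)) \<le> 1/4" .
  moreover have "l \<ge> 0"
    using NM h by (auto simp: l_def)
  ultimately show ?thesis
    using that h Nh by blast
qed

lemma input_shift:
  assumes d: "Linf {-r..} D d" and u: "Linf_loc {-r..} U u"
    and Dm: "\<forall>v\<in>D. norm v \<le> Dm" and "t \<ge> 0"
    and u_small: "ess_norm {-r..0} (shift u t) \<le> ereal \<delta>"
  shows "Linf {-r..0} D (shift d t)" "Linf {-r..0} U (shift u t)"
    "AE s in lebesgue_on {-r..0}. norm (shift d t s, shift u t s) \<le> Dm + \<delta>"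
proof -
  have window: "\<And>s. s \<in> {-r..0} \<Longrightarrow> t + s \<in> {-r..}"
    using \<open>t \<ge> 0\<close> by auto
  have dm: "shift d t \<in> borel_measurable (lebesgue_on {-r..0})"
    unfolding shift_def
    by (rule borel_measurable_lebesgue_on_translate[of "{-r..}"]) (use d window in \<open>auto simp: Linf_def\<close>)
  have um: "shift u t \<in> borel_measurable (lebesgue_on {-r..0})"
    unfolding shift_def
    by (rule borel_measurable_lebesgue_on_translate[of "{-r..}"]) (use u window in \<open>auto simp: Linf_loc_def\<close>)
  have "AE s in lebesgue_on {-r..0}. t + s \<in> {-r..} \<longrightarrow> d (t + s) \<in> D"
    by (rule AE_lebesgue_on_translate) (use d in \<open>auto simp: Linf_def\<close>)
  then have dD: "AE s in lebesgue_on {-r..0}. shift d t s \<in> D"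
    using AE_lebesgue_on_mem by eventually_elim (use window in \<open>auto simp: shift_def\<close>)
  have "AE s in lebesgue_on {-r..0}. t + s \<in> {-r..} \<longrightarrow> u (t + s) \<in> U"
    by (rule AE_lebesgue_on_translate) (use u in \<open>auto simp: Linf_loc_def\<close>)
  then have uU: "AE s in lebesgue_on {-r..0}. shift u t s \<in> U"
    using AE_lebesgue_on_mem by eventually_elim (use window in \<open>auto simp: shift_def\<close>)
  have dB: "AE s in lebesgue_on {-r..0}. norm (shift d t s) \<le> Dm"
    using dD by eventually_elim (use Dm in auto)
  then show "Linf {-r..0} D (shift d t)"
    by (rule Linf_if_AE_bounded[OF dm dD])
  show "Linf {-r..0} U (shift u t)"
    using um uU u_small unfolding Linf_def by auto
  have "AE s in lebesgue_on {-r..0}. norm (shift u t s) \<le> \<delta>"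
    by (rule AE_norm_le_if_ess_norm_le[OF u_small])
  then show "AE s in lebesgue_on {-r..0}. norm (shift d t s, shift u t s) \<le> Dm + \<delta>"
    using dB by eventually_elim (use norm_Pair_le in \<open>smt (verit)\<close>)
qed

lemma f_shift_estimates:
  assumes "R > 0" "0 < h" "h < r" "N R * h \<le> 1/4" "l \<ge> 0" "M R * exp (- (l * h)) \<le> 1/4"
    and t: "0 \<le> t" "t < B"
    and g1m: "g1 \<in> borel_measurable (lebesgue_on {-r..<B})"
    and g2m: "g2 \<in> borel_measurable (lebesgue_on {-r..<B})"
    and g1_le: "AE \<tau> in lebesgue_on {-r..<B}. norm (g1 \<tau>) \<le> R"
    and g2_le: "AE \<tau> in lebesgue_on {-r..<B}. norm (g2 \<tau>) \<le> R"
    and diff: "AE \<tau> in lebesgue_on {-r..<B}. norm (g1 \<tau> - g2 \<tau>) \<le> e + c * exp (l * \<tau>)"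
    and "e \<ge> 0" "c \<ge> 0"
    and d: "Linf {-r..0} D (shift d t)" and u: "Linf {-r..0} U (shift u t)"
    and du_le: "AE s in lebesgue_on {-r..0}. norm (shift d t s, shift u t s) \<le> R"
  shows "norm (f (shift g1 t) (shift d t) (shift u t) - f (shift g2 t) (shift d t) (shift u t))
           \<le> (N R * h + M R) * e + c / 2 * exp (l * t)"
    and "norm (f (shift g1 t) (shift d t) (shift u t)) \<le> a R"
proof -
  note g1 = Linf_shift[OF g1m g1_le t] and g2 = Linf_shift[OF g2m g2_le t]
  have "AE s in lebesgue_on {-h..<0}. norm (g1 (t + s) - g2 (t + s)) \<le> e + c * exp (l * (t + 0))"
    and "AE s in lebesgue_on {-r..<-h}. norm (g1 (t + s) - g2 (t + s)) \<le> e + c * exp (l * (t + -h))"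
    by (rule AE_shift_exp_bound[OF _ diff \<open>c \<ge> 0\<close> \<open>l \<ge> 0\<close>]; use assms(2,3) t in auto)+
  then have "AE s in lebesgue_on {-h..<0}. norm (shift g1 t s - shift g2 t s) \<le> e + c * exp (l * t)"
    and "AE s in lebesgue_on {-r..<-h}. norm (shift g1 t s - shift g2 t s) \<le> e + c * exp (l * (t - h))"
    by (simp_all add: shift_def)
  note lip = f_lipschitz[OF assms(1-3) g1(1) g2(1) d u g1(2) g2(2) du_le this]
  then show "norm (f (shift g1 t) (shift d t) (shift u t)) \<le> a R"
    by blast
  have "N R \<ge> 0" "M R \<ge> 0"
    using aMN_nonneg \<open>R > 0\<close> by auto
  have "exp (l * (t - h)) = exp (l * t) * exp (- (l * h))"
    by (simp add: exp_add[symmetric] algebra_simps)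
  then have "N R * h * (e + c * exp (l * t)) + M R * (e + c * exp (l * (t - h)))
      = (N R * h + M R) * e + (c * exp (l * t)) * (N R * h + M R * exp (- (l * h)))"
    by algebra
  also have "\<dots> \<le> (N R * h + M R) * e + (c * exp (l * t)) * (1/2)"
    using assms(4,6) \<open>c \<ge> 0\<close> by (intro add_left_mono mult_left_mono) auto
  finally show "norm (f (shift g1 t) (shift d t) (shift u t) - f (shift g2 t) (shift d t) (shift u t))
           \<le> (N R * h + M R) * e + c / 2 * exp (l * t)"
    using lip(1) by simp
qed

lemma bounded_solutions_agree:
  assumes "R > 0"
    and du_le: "\<And>t. 0 \<le> t \<Longrightarrow> Linf {-r..0} D (shift d t) \<and> Linf {-r..0} U (shift u t) \<and>
                 (AE s in lebesgue_on {-r..0}. norm (shift d t s, shift u t s) \<le> R)"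
    and ym: "y \<in> borel_measurable (lebesgue_on {-r..<B})"
    and xm: "x \<in> borel_measurable (lebesgue_on {-r..<B})"
    and y_le: "AE \<tau> in lebesgue_on {-r..<B}. norm (y \<tau>) \<le> R"
    and x_le: "AE \<tau> in lebesgue_on {-r..<B}. norm (x \<tau>) \<le> R"
    and y_eq: "AE t in lebesgue_on {0..<B}. y t = f (shift y t) (shift d t) (shift u t)"
    and x_eq: "AE t in lebesgue_on {0..<B}. x t = f (shift x t) (shift d t) (shift u t)"
    and initial: "AE \<tau> in lebesgue_on {-r..<B}. \<tau> < 0 \<longrightarrow> y \<tau> = x \<tau>"
  shows "AE \<tau> in lebesgue_on {-r..<B}. y \<tau> = x \<tau>"
proof -
  obtain h l where hl: "0 < h" "h < r" "N R * h \<le> 1/4" "l \<ge> 0" "M R * exp (- (l * h)) \<le> 1/4"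
    using contraction_params[OF \<open>R > 0\<close>] by blast
  have "AE \<tau> in lebesgue_on {0..<B}. norm (y \<tau>) \<le> R" "AE \<tau> in lebesgue_on {0..<B}. norm (x \<tau>) \<le> R"
    by (rule AE_lebesgue_on_subset[OF _ _ y_le] AE_lebesgue_on_subset[OF _ _ x_le]; use r_pos in auto)+
  then have "AE \<tau> in lebesgue_on {0..<B}. norm (y \<tau> - x \<tau>) \<le> 2 * R * exp (l * \<tau>)"
    using AE_lebesgue_on_mem
  proof eventually_elim
    case (elim \<tau>)
    have "norm (y \<tau> - x \<tau>) \<le> 2 * R"
      using elim norm_triangle_ineq4[of "y \<tau>" "x \<tau>"] by simp
    also have "\<dots> \<le> 2 * R * exp (l * \<tau>)"
      using elim hl \<open>R > 0\<close> by (simp add: mult_le_cancel_left1)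
    finally show ?case .
  qed
  then have "AE \<tau> in lebesgue_on {0..<B}. norm (y \<tau> - x \<tau>) \<le> 2 * 0 * exp (l * \<tau>)"
  proof (rule AE_le_by_halving[rotated])
    fix c :: real assume "c \<ge> 0"
      and bound: "AE \<tau> in lebesgue_on {0..<B}. norm (y \<tau> - x \<tau>) \<le> c * exp (l * \<tau>)"
    have "AE \<tau> in lebesgue_on {-r..<B}. \<tau> < 0 \<longrightarrow> norm (y \<tau> - x \<tau>) \<le> 0 + c * exp (l * \<tau>)"
      using initial by eventually_elim (use \<open>c \<ge> 0\<close> in simp)
    moreover have "AE \<tau> in lebesgue_on {0..<B}. norm (y \<tau> - x \<tau>) \<le> 0 + c * exp (l * \<tau>)"
      using bound by simp
    ultimately have diff: "AE \<tau> in lebesgue_on {-r..<B}. norm (y \<tau> - x \<tau>) \<le> 0 + c * exp (l * \<tau>)"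
      by (rule AE_lebesgue_on_Ico_split)
    show "AE \<tau> in lebesgue_on {0..<B}. norm (y \<tau> - x \<tau>) \<le> (c / 2 + 0) * exp (l * \<tau>)"
      using y_eq x_eq AE_lebesgue_on_mem
    proof eventually_elim
      case (elim t)
      then have t: "0 \<le> t" "t < B" by auto
      have "norm (f (shift y t) (shift d t) (shift u t) - f (shift x t) (shift d t) (shift u t))
           \<le> (N R * h + M R) * 0 + c / 2 * exp (l * t)"
        using du_le[OF t(1)]
        by (intro f_shift_estimates(1)[OF \<open>R > 0\<close> hl t ym xm y_le x_le diff order.refl \<open>c \<ge> 0\<close>]) auto
      then show ?case
        using elim by simp
    qed
  qed (use \<open>R > 0\<close> in auto)
  then have "AE \<tau> in lebesgue_on {0..<B}. y \<tau> = x \<tau>"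
    by eventually_elim simp
  then show ?thesis
    by (rule AE_lebesgue_on_Ico_split[OF initial])
qed

lemma solutions_agree_before:
  assumes "0 < B" "B < S" "W \<ge> 0"
    and inputs: "\<And>t. 0 \<le> t \<Longrightarrow> Linf {-r..0} D (shift d t) \<and> Linf {-r..0} U (shift u t) \<and>
                 (AE s in lebesgue_on {-r..0}. norm (shift d t s, shift u t s) \<le> W)"
    and y: "Linf_loc {-r..<S} UNIV y" and x: "Linf_loc {-r..<S} UNIV x"
    and y_eq: "AE t in lebesgue_on {0..<S}. y t = f (shift y t) (shift d t) (shift u t)"
    and x_eq: "AE t in lebesgue_on {0..<S}. x t = f (shift x t) (shift d t) (shift u t)"
    and y0: "ae_eq {-r..<0} y x0" and x0: "ae_eq {-r..<0} x x0"
  shows "AE \<tau> in lebesgue_on {-r..<B}. y \<tau> = x \<tau>"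
proof -
  have sub: "{-r..B} \<subseteq> {-r..<S}"
    using \<open>B < S\<close> by auto
  obtain Ry where "Ry \<ge> 0" "AE \<tau> in lebesgue_on {-r..B}. norm (y \<tau>) \<le> Ry"
    using ess_norm_finite_imp_bound[of "{-r..B}" y] y sub unfolding Linf_loc_def by blast
  obtain Rx where "Rx \<ge> 0" "AE \<tau> in lebesgue_on {-r..B}. norm (x \<tau>) \<le> Rx"
    using ess_norm_finite_imp_bound[of "{-r..B}" x] x sub unfolding Linf_loc_def by blast
  define R where "R = Ry + Rx + W + 1"
  have R: "R > 0" "Ry \<le> R" "Rx \<le> R" "W \<le> R"
    using \<open>Ry \<ge> 0\<close> \<open>Rx \<ge> 0\<close> \<open>W \<ge> 0\<close> by (simp_all add: R_def)
  show ?thesis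
  proof (rule bounded_solutions_agree[OF R(1)])
    show "Linf {-r..0} D (shift d t) \<and> Linf {-r..0} U (shift u t) \<and>
        (AE s in lebesgue_on {-r..0}. norm (shift d t s, shift u t s) \<le> R)" if "0 \<le> t" for t
    proof -
      have "AE s in lebesgue_on {-r..0}. norm (shift d t s, shift u t s) \<le> W"
        using inputs[OF that] by blast
      then have "AE s in lebesgue_on {-r..0}. norm (shift d t s, shift u t s) \<le> R"
        by eventually_elim (use R(4) in simp)
      then show ?thesis
        using inputs[OF that] by blast
    qed
    show "y \<in> borel_measurable (lebesgue_on {-r..<B})" "x \<in> borel_measurable (lebesgue_on {-r..<B})"
      using x y \<open>B < S\<close> by (auto simp: Linf_loc_def intro: measurable_restrict_mono[of _ _ "{-r..<S}"])
    have "AE \<tau> in lebesgue_on {-r..<B}. norm (y \<tau>) \<le> Ry" "AE \<tau> in lebesgue_on {-r..<B}. norm (x \<tau>) \<le> Rx"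
      by (rule AE_lebesgue_on_subset[OF _ _ \<open>AE \<tau> in lebesgue_on {-r..B}. norm (y \<tau>) \<le> Ry\<close>]
          AE_lebesgue_on_subset[OF _ _ \<open>AE \<tau> in lebesgue_on {-r..B}. norm (x \<tau>) \<le> Rx\<close>]; auto)+
    then show "AE \<tau> in lebesgue_on {-r..<B}. norm (y \<tau>) \<le> R" "AE \<tau> in lebesgue_on {-r..<B}. norm (x \<tau>) \<le> R"
      using R(2,3) by (auto elim: eventually_mono)
    show "AE t in lebesgue_on {0..<B}. y t = f (shift y t) (shift d t) (shift u t)"
      "AE t in lebesgue_on {0..<B}. x t = f (shift x t) (shift d t) (shift u t)"
      using \<open>B < S\<close> by (auto intro: AE_lebesgue_on_subset[OF _ _ y_eq] AE_lebesgue_on_subset[OF _ _ x_eq])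
    have "AE \<tau> in lebesgue_on {-r..<B}. \<tau> \<in> {-r..<0} \<longrightarrow> y \<tau> = x0 \<tau>"
      "AE \<tau> in lebesgue_on {-r..<B}. \<tau> \<in> {-r..<0} \<longrightarrow> x \<tau> = x0 \<tau>"
      by (rule AE_lebesgue_on_restrict[OF _ _ y0[unfolded ae_eq_def]]
          AE_lebesgue_on_restrict[OF _ _ x0[unfolded ae_eq_def]]; simp)+
    then show "AE \<tau> in lebesgue_on {-r..<B}. \<tau> < 0 \<longrightarrow> y \<tau> = x \<tau>"
      using AE_lebesgue_on_mem by eventually_elim auto
  qed
qed

lemma solutions_agree:
  assumes "0 < S" "W \<ge> 0"
    and inputs: "\<And>t. 0 \<le> t \<Longrightarrow> Linf {-r..0} D (shift d t) \<and> Linf {-r..0} U (shift u t) \<and>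
                 (AE s in lebesgue_on {-r..0}. norm (shift d t s, shift u t s) \<le> W)"
    and "Linf_loc {-r..<S} UNIV y" "Linf_loc {-r..<S} UNIV x"
    and "AE t in lebesgue_on {0..<S}. y t = f (shift y t) (shift d t) (shift u t)"
    and "AE t in lebesgue_on {0..<S}. x t = f (shift x t) (shift d t) (shift u t)"
    and "ae_eq {-r..<0} y x0" "ae_eq {-r..<0} x x0"
  shows "ae_eq {-r..<S} y x"
proof -
  define B where "B n = S - S / (real n + 2)" for n :: nat
  have B: "0 < B n" "B n < S" for n
  proof -
    have "S / (real n + 2) \<le> S / 2"
      using \<open>0 < S\<close> by (intro divide_left_mono) auto
    then show "0 < B n"
      using \<open>0 < S\<close> unfolding B_def by linarith
    show "B n < S"
      using \<open>0 < S\<close> unfolding B_def by simp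
  qed
  have "AE \<tau> in lebesgue_on {-r..<S}. \<tau> \<in> {-r..<B n} \<longrightarrow> y \<tau> = x \<tau>" for n
    by (rule AE_lebesgue_on_restrict[OF _ _ solutions_agree_before[OF B \<open>W \<ge> 0\<close> inputs assms(4-)]])
      auto
  then have "AE \<tau> in lebesgue_on {-r..<S}. \<forall>n. \<tau> \<in> {-r..<B n} \<longrightarrow> y \<tau> = x \<tau>"
    by (subst AE_all_countable) blast
  then show ?thesis
    unfolding ae_eq_def using AE_lebesgue_on_mem
  proof eventually_elim
    case (elim \<tau>)
    then have \<tau>: "-r \<le> \<tau>" "\<tau> < S" by auto
    obtain n :: nat where n: "S / (S - \<tau>) < real n"
      using reals_Archimedean2 by blast
    have "S < real n * (S - \<tau>)"
      using n \<tau> by (simp add: field_simps)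
    also have "\<dots> < (real n + 2) * (S - \<tau>)"
      using \<tau> by (intro mult_strict_right_mono) auto
    finally have "\<tau> < B n"
      by (simp add: B_def field_simps)
    then show ?case
      using elim \<tau> by auto
  qed
qed

lemma b_mono: "0 \<le> x \<Longrightarrow> x \<le> y \<Longrightarrow> b x \<le> b y"
  using b_K_inf unfolding K_inf_def by (auto intro: strict_mono_on_leD)

lemma b_nonneg: "0 \<le> x \<Longrightarrow> 0 \<le> b x"
  using b_mono[of 0 x] b_K_inf unfolding K_inf_def by auto

lemma b_small:
  assumes "e > 0"
  obtains \<delta> where "\<delta> > 0" "\<And>x. 0 \<le> x \<Longrightarrow> x < \<delta> \<Longrightarrow> b x < e"
proof -
  have "continuous_on {0..} b" "b 0 = 0"
    using b_K_inf by (simp_all add: K_inf_def)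
  then obtain \<delta> where "\<delta> > 0" "\<forall>x\<in>{0..}. dist x 0 < \<delta> \<longrightarrow> dist (b x) 0 < e"
    using assms unfolding continuous_on_iff by (metis atLeast_iff order_refl)
  then show ?thesis
    by (intro that[of \<delta>]) (auto simp: dist_real_def abs_less_iff)
qed

lemma norm_f_zero_le:
  assumes d: "Linf {-r..0} D d" and u: "Linf {-r..0} U u" and u_small: "ess_norm {-r..0} u \<le> ereal \<delta>"
  shows "norm (f (\<lambda>s. 0) d u) \<le> b \<delta>"
proof -
  have zero_le: "ess_norm {-r..<0} (\<lambda>s. 0 :: real ^ 'n) \<le> ereal 0"
    by (rule ess_norm_le_ereal) simp_all
  then have "Linf {-r..<0} UNIV (\<lambda>s. 0 :: real ^ 'n)"
    unfolding Linf_def by auto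
  then have bound: "norm (f (\<lambda>s. 0) d u)
     \<le> b (real_of_ereal (max (ess_norm {-r..<0} (\<lambda>s. 0 :: real ^ 'n)) (ess_norm {-r..0} u)))"
    using H3 d u by blast
  have "0 \<le> ess_norm {-r..<0} (\<lambda>s. 0 :: real ^ 'n)" "0 \<le> ess_norm {-r..0} u"
    using r_pos by (auto intro: ess_norm_nonneg)
  then have "max (ess_norm {-r..<0} (\<lambda>s. 0 :: real ^ 'n)) (ess_norm {-r..0} u) = ess_norm {-r..0} u"
    using zero_le by (metis antisym max.absorb2 zero_ereal_def)
  moreover obtain v where "ess_norm {-r..0} u = ereal v" "0 \<le> v" "v \<le> \<delta>"
    using \<open>0 \<le> ess_norm {-r..0} u\<close> u_small by (cases "ess_norm {-r..0} u") auto
  ultimately show ?thesis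
    using bound b_mono[of v \<delta>] by simp
qed

end

section \<open>Picard iteration for small data\<close>

locale picard_setting = delay_system r D U f a M N b
  for r D U and f :: "(real \<Rightarrow> real ^ 'n) \<Rightarrow> (real \<Rightarrow> real ^ 'm1) \<Rightarrow> (real \<Rightarrow> real ^ 'm2) \<Rightarrow> real ^ 'n"
    and a M N b +
  fixes x0 :: "real \<Rightarrow> real ^ 'n" and d :: "real \<Rightarrow> real ^ 'm1" and u :: "real \<Rightarrow> real ^ 'm2"
    and \<rho> \<delta> Dm R h l S :: real
  assumes rho_pos: "\<rho> > 0" and delta: "\<delta> > 0" "\<delta> \<le> \<rho>" and R: "\<rho> \<le> R" "Dm + \<delta> \<le> R"
    and Dm: "\<forall>v\<in>D. norm v \<le> Dm"
    and hl: "0 < h" "h < r" "N R * h \<le> 1/4" "l \<ge> 0" "M R * exp (- (l * h)) \<le> 1/4"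
    and S_pos: "S > 0"
    and x0: "Linf {-r..<0} UNIV x0" and x0_small: "AE s in lebesgue_on {-r..<0}. norm (x0 s) \<le> \<delta>"
    and d: "Linf {-r..} D d" and u: "Linf_loc {-r..} U u"
    and u_small: "\<forall>t\<ge>0. ess_norm {-r..0} (shift u t) \<le> ereal \<delta>"
    and forcing_small: "2 * ((N R * h + M R) * \<delta> + b \<delta>) * exp (l * S) \<le> \<rho>"
begin

lemma R_pos: "R > 0"
  using rho_pos R by linarith

lemma a_R_nonneg: "a R \<ge> 0"
  using aMN_nonneg R_pos by auto

lemma rho_nonneg: "0 \<le> \<rho>"
  using rho_pos by linarith

lemma input_shift_R:
  assumes "t \<ge> 0"
  shows "Linf {-r..0} D (shift d t)" "Linf {-r..0} U (shift u t)"
    "AE s in lebesgue_on {-r..0}. norm (shift d t s, shift u t s) \<le> R"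
proof -
  note inputs = input_shift[OF d u Dm assms, of \<delta>]
  then show "Linf {-r..0} D (shift d t)" "Linf {-r..0} U (shift u t)"
    using u_small assms by auto
  show "AE s in lebesgue_on {-r..0}. norm (shift d t s, shift u t s) \<le> R"
    using inputs(3) u_small assms by (auto elim: eventually_mono intro: order.trans[OF _ R(2)])
qed

lemma AE_norm_retract_le_R: "AE \<tau> in lebesgue_on A. norm (ball_retract \<rho> (g \<tau>)) \<le> R"
  using norm_ball_retract_le[OF rho_nonneg] R(1) by (auto intro: order.trans)

text \<open>Retracting the history onto the ball of radius \<open>\<rho> \<le> R\<close> makes the constants of (H1)
  for radius \<open>R\<close> apply to every iterate.\<close>

definition picard_map :: "(real \<Rightarrow> real ^ 'n) \<Rightarrow> real \<Rightarrow> real ^ 'n" where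
  "picard_map g t =
     (if t < 0 then ball_retract \<rho> (x0 t)
      else f (shift (\<lambda>\<tau>. ball_retract \<rho> (g \<tau>)) t) (shift d t) (shift u t))"

definition picard_iterate :: "nat \<Rightarrow> real \<Rightarrow> real ^ 'n" where
  "picard_iterate k = (picard_map ^^ k) (\<lambda>t. if t < 0 then ball_retract \<rho> (x0 t) else 0)"

definition picard_limit :: "real \<Rightarrow> real ^ 'n" where
  "picard_limit t = lim (\<lambda>k. picard_iterate k t)"

lemma picard_iterate_neg: "t < 0 \<Longrightarrow> picard_iterate k t = ball_retract \<rho> (x0 t)"
  by (cases k) (auto simp: picard_iterate_def picard_map_def)

lemma picard_map_measurable:
  assumes gm: "g \<in> borel_measurable (lebesgue_on {-r..<S})"
    and g_neg: "\<forall>t<0. g t = ball_retract \<rho> (x0 t)"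
  shows "picard_map g \<in> borel_measurable (lebesgue_on {-r..<S})"
proof -
  have pm: "(\<lambda>\<tau>. ball_retract \<rho> (g \<tau>)) \<in> borel_measurable (lebesgue_on {-r..<S})"
    by (rule borel_measurable_ball_retract[OF rho_nonneg gm])
  then have "Linf {-r..<S} UNIV (\<lambda>\<tau>. ball_retract \<rho> (g \<tau>))"
    using AE_norm_retract_le_R by (intro Linf_if_AE_bounded) auto
  moreover have "Linf {-r..S} D d"
    using d Dm
    by (intro Linf_if_AE_bounded[where c=Dm])
      (auto simp: Linf_def intro: measurable_restrict_mono AE_lebesgue_on_subset[of "{-r..}"] elim!: AE_mp)
  moreover have "Linf {-r..S} U u"
    using u unfolding Linf_loc_def Linf_def
    by (auto intro: measurable_restrict_mono AE_lebesgue_on_subset[of "{-r..}"])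
  ultimately have "Linf {-r..<S} UNIV (\<lambda>t. if t < 0 then ball_retract \<rho> (g t)
      else f (shift (\<lambda>\<tau>. ball_retract \<rho> (g \<tau>)) t) (shift d t) (shift u t))"
    using H2 S_pos by blast
  moreover have "(\<lambda>t. if t < 0 then ball_retract \<rho> (g t)
      else f (shift (\<lambda>\<tau>. ball_retract \<rho> (g \<tau>)) t) (shift d t) (shift u t)) = picard_map g"
    using g_neg by (auto simp: picard_map_def ball_retract_idem[OF rho_nonneg])
  ultimately show ?thesis
    unfolding Linf_def by simp
qed

lemma picard_iterate_measurable: "picard_iterate k \<in> borel_measurable (lebesgue_on {-r..<S})"
proof (induction k)
  case 0
  have "(\<lambda>t. ball_retract \<rho> (x0 t)) \<in> borel_measurable (lebesgue_on {-r..<0})"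
    using x0 by (simp add: Linf_def borel_measurable_ball_retract[OF rho_nonneg])
  then have "(\<lambda>t. if t \<in> {-r..<0} then ball_retract \<rho> (x0 t) else 0) \<in> borel_measurable (lebesgue_on {-r..<S})"
    using borel_measurable_if_lebesgue_on[of "{-r..<0}" "{-r..<S}" "\<lambda>t. ball_retract \<rho> (x0 t)"] S_pos
    by auto
  then show ?case
    by (rule measurable_cong[THEN iffD1, rotated]) (auto simp: picard_iterate_def)
next
  case (Suc k)
  then show ?case
    using picard_map_measurable[OF Suc] picard_iterate_neg by (simp add: picard_iterate_def)
qed

lemma picard_map_estimates:
  assumes g1m: "g1 \<in> borel_measurable (lebesgue_on {-r..<S})"
    and g2m: "g2 \<in> borel_measurable (lebesgue_on {-r..<S})"
    and diff: "AE \<tau> in lebesgue_on {-r..<S}. norm (g1 \<tau> - g2 \<tau>) \<le> c * exp (l * \<tau>)"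
    and "c \<ge> 0" and t: "t < S"
  shows "norm (picard_map g1 t - picard_map g2 t) \<le> c / 2 * exp (l * t)"
    and "0 \<le> t \<Longrightarrow> norm (picard_map g1 t) \<le> a R"
proof -
  have "AE \<tau> in lebesgue_on {-r..<S}.
      norm (ball_retract \<rho> (g1 \<tau>) - ball_retract \<rho> (g2 \<tau>)) \<le> 0 + c * exp (l * \<tau>)"
    using diff
  proof eventually_elim
    case (elim \<tau>)
    have "norm (ball_retract \<rho> (g1 \<tau>) - ball_retract \<rho> (g2 \<tau>)) \<le> norm (g1 \<tau> - g2 \<tau>)"
      by (rule ball_retract_lipschitz[OF rho_nonneg])
    then show ?case
      using elim by simp
  qed
  note est = f_shift_estimates[OF R_pos hl(1,2,3,4,5) _ t
      borel_measurable_ball_retract[OF rho_nonneg g1m] borel_measurable_ball_retract[OF rho_nonneg g2m]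
      AE_norm_retract_le_R AE_norm_retract_le_R this order.refl \<open>c \<ge> 0\<close> input_shift_R]
  show "norm (picard_map g1 t - picard_map g2 t) \<le> c / 2 * exp (l * t)"
    using est(1) \<open>c \<ge> 0\<close> by (cases "t < 0") (simp_all add: picard_map_def)
  show "0 \<le> t \<Longrightarrow> norm (picard_map g1 t) \<le> a R"
    using est(2) by (simp add: picard_map_def)
qed

lemma exp_weight_ge: "c \<ge> 0 \<Longrightarrow> \<tau> \<ge> 0 \<Longrightarrow> c \<le> c * exp (l * \<tau>)"
  using hl(4) by (simp add: mult_le_cancel_left1)

lemma picard_iterate_increment:
  "AE \<tau> in lebesgue_on {-r..<S}.
     norm (picard_iterate (Suc k) \<tau> - picard_iterate k \<tau>) \<le> a R / 2 ^ k * exp (l * \<tau>)"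
proof (induction k)
  case 0
  have "norm (picard_iterate 1 \<tau> - picard_iterate 0 \<tau>) \<le> a R * exp (l * \<tau>)" if "\<tau> < S" for \<tau>
  proof (cases "\<tau> < 0")
    case False
    have "norm (picard_map (picard_iterate 0) \<tau>) \<le> a R"
      by (rule picard_map_estimates(2)[OF picard_iterate_measurable picard_iterate_measurable _ order.refl])
        (use False that in auto)
    moreover have "picard_iterate 1 \<tau> - picard_iterate 0 \<tau> = picard_map (picard_iterate 0) \<tau>"
      using False by (simp add: picard_iterate_def)
    moreover have "a R \<le> a R * exp (l * \<tau>)"
      using False exp_weight_ge[OF a_R_nonneg] by simp
    ultimately show ?thesis
      by simp
  qed (use picard_iterate_neg a_R_nonneg in simp)
  then show ?case
    by (intro AE_I2) auto
next
  case (Suc k)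
  have "norm (picard_map (picard_iterate (Suc k)) \<tau> - picard_map (picard_iterate k) \<tau>)
      \<le> a R / 2 ^ k / 2 * exp (l * \<tau>)" if "\<tau> < S" for \<tau>
    by (rule picard_map_estimates(1)[OF picard_iterate_measurable picard_iterate_measurable Suc _ that])
      (use a_R_nonneg in auto)
  then show ?case
    by (intro AE_I2) (auto simp: picard_iterate_def mult_ac)
qed

lemma picard_limit_dist:
  "AE \<tau> in lebesgue_on {-r..<S}.
     \<forall>k. norm (picard_limit \<tau> - picard_iterate k \<tau>) \<le> 2 * a R / 2 ^ k * exp (l * \<tau>)"
proof -
  have "AE \<tau> in lebesgue_on {-r..<S}.
      \<forall>k. norm (picard_iterate (Suc k) \<tau> - picard_iterate k \<tau>) \<le> a R * exp (l * \<tau>) / 2 ^ k"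
    using picard_iterate_increment by (simp add: AE_all_countable)
  then show ?thesis
  proof eventually_elim
    case (elim \<tau>)
    show ?case
      using convergent_and_dist_lim_le_if_geometric_increments(2)[of "\<lambda>k. picard_iterate k \<tau>", OF elim[rule_format]]
      by (simp add: picard_limit_def mult.assoc)
  qed
qed

lemma picard_limit_neg: "t < 0 \<Longrightarrow> picard_limit t = ball_retract \<rho> (x0 t)"
  by (simp add: picard_limit_def picard_iterate_neg)

lemma picard_limit_measurable: "picard_limit \<in> borel_measurable (lebesgue_on {-r..<S})"
  unfolding picard_limit_def by (rule borel_measurable_lim_metric) (rule picard_iterate_measurable)

lemma picard_limit_fixed_point: "AE \<tau> in lebesgue_on {-r..<S}. picard_map picard_limit \<tau> = picard_limit \<tau>"
proof -
  have "AE \<tau> in lebesgue_on {-r..<S}.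
      norm (picard_map picard_limit \<tau> - picard_limit \<tau>) \<le> 2 * a R * exp (l * \<tau>) / 2 ^ k" for k :: nat
  proof -
    have "AE \<tau> in lebesgue_on {-r..<S}.
        norm (picard_limit \<tau> - picard_iterate k \<tau>) \<le> (2 * a R / 2 ^ k) * exp (l * \<tau>)"
      using picard_limit_dist by eventually_elim auto
    from picard_map_estimates(1)[OF picard_limit_measurable picard_iterate_measurable this]
    have step: "norm (picard_map picard_limit \<tau> - picard_iterate (Suc k) \<tau>) \<le> a R * exp (l * \<tau>) / 2 ^ k"
      if "\<tau> < S" for \<tau>
      using that a_R_nonneg by (simp add: picard_iterate_def)
    show ?thesis
      using picard_limit_dist AE_lebesgue_on_mem
    proof eventually_elim
      case (elim \<tau>)
      have "norm (picard_limit \<tau> - picard_iterate (Suc k) \<tau>) \<le> a R * exp (l * \<tau>) / 2 ^ k"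
        using elim(1)[rule_format, of "Suc k"] by simp
      then show ?case
        using step[of \<tau>]
        using elim norm_triangle_ineq4[of "picard_map picard_limit \<tau> - picard_iterate (Suc k) \<tau>"
            "picard_limit \<tau> - picard_iterate (Suc k) \<tau>"]
        by simp
    qed
  qed
  then have "AE \<tau> in lebesgue_on {-r..<S}.
      \<forall>k::nat. norm (picard_map picard_limit \<tau> - picard_limit \<tau>) \<le> 2 * a R * exp (l * \<tau>) / 2 ^ k"
    by (simp add: AE_all_countable)
  then show ?thesis
  proof eventually_elim
    case (elim \<tau>)
    then have "norm (picard_map picard_limit \<tau> - picard_limit \<tau>) \<le> 0"
      by (intro nonpos_if_le_div_power2) blast
    then show ?case
      by simp
  qed
qed

lemma picard_limit_eq_picard_map: "AE \<tau> in lebesgue_on {0..<S}. picard_limit \<tau> = picard_map picard_limit \<tau>"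
proof -
  have "AE \<tau> in lebesgue_on {0..<S}. picard_map picard_limit \<tau> = picard_limit \<tau>"
    by (rule AE_lebesgue_on_subset[OF _ _ picard_limit_fixed_point]) (use r_pos in auto)
  then show ?thesis
    by (auto elim: eventually_mono)
qed

definition forcing :: real where
  "forcing = (N R * h + M R) * \<delta> + b \<delta>"

lemma forcing_nonneg: "forcing \<ge> 0"
  unfolding forcing_def using aMN_nonneg R_pos hl delta b_nonneg[of \<delta>]
  by (intro add_nonneg_nonneg mult_nonneg_nonneg) auto

lemma picard_limit_le_a_R: "AE \<tau> in lebesgue_on {0..<S}. norm (picard_limit \<tau>) \<le> a R * exp (l * \<tau>)"
  using picard_limit_eq_picard_map AE_lebesgue_on_mem
proof eventually_elim
  case (elim \<tau>)
  have "AE \<tau> in lebesgue_on {-r..<S}. norm (picard_limit \<tau> - picard_limit \<tau>) \<le> 0 * exp (l * \<tau>)"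
    by simp
  then have "norm (picard_map picard_limit \<tau>) \<le> a R"
    using elim by (intro picard_map_estimates(2)[OF picard_limit_measurable picard_limit_measurable]) auto
  then show ?case
    using elim exp_weight_ge[OF a_R_nonneg, of \<tau>] by simp
qed

lemma norm_retract_picard_limit_le:
  assumes "c \<ge> 0" and bound: "AE \<tau> in lebesgue_on {0..<S}. norm (picard_limit \<tau>) \<le> c * exp (l * \<tau>)"
  shows "AE \<tau> in lebesgue_on {-r..<S}. norm (ball_retract \<rho> (picard_limit \<tau>) - 0) \<le> \<delta> + c * exp (l * \<tau>)"
proof -
  have "AE \<tau> in lebesgue_on {-r..<S}. \<tau> \<in> {0..<S} \<longrightarrow> norm (picard_limit \<tau>) \<le> c * exp (l * \<tau>)"
    by (rule AE_lebesgue_on_restrict[OF _ _ bound]) auto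
  moreover have "AE \<tau> in lebesgue_on {-r..<S}. \<tau> \<in> {-r..<0} \<longrightarrow> norm (x0 \<tau>) \<le> \<delta>"
    by (rule AE_lebesgue_on_restrict[OF _ _ x0_small]) auto
  ultimately show ?thesis
    using AE_lebesgue_on_mem
  proof eventually_elim
    case (elim \<tau>)
    have "0 \<le> c * exp (l * \<tau>)"
      using \<open>c \<ge> 0\<close> by simp
    show ?case
    proof (cases "\<tau> < 0")
      case True
      then have "norm (ball_retract \<rho> (picard_limit \<tau>)) \<le> norm (x0 \<tau>)"
        by (simp add: picard_limit_neg ball_retract_idem[OF rho_nonneg] norm_ball_retract_le_norm[OF rho_nonneg])
      then show ?thesis
        using elim True \<open>0 \<le> c * exp (l * \<tau>)\<close> by simp
    next
      case False
      have "norm (ball_retract \<rho> (picard_limit \<tau>)) \<le> norm (picard_limit \<tau>)"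
        by (rule norm_ball_retract_le_norm[OF rho_nonneg])
      then show ?thesis
        using elim False delta by simp
    qed
  qed
qed

lemma picard_limit_bound_step:
  assumes "c \<ge> 0" "AE \<tau> in lebesgue_on {0..<S}. norm (picard_limit \<tau>) \<le> c * exp (l * \<tau>)"
  shows "AE \<tau> in lebesgue_on {0..<S}. norm (picard_limit \<tau>) \<le> (c / 2 + forcing) * exp (l * \<tau>)"
  using picard_limit_eq_picard_map AE_lebesgue_on_mem
proof eventually_elim
  case (elim t)
  then have t: "0 \<le> t" "t < S" by auto
  let ?F = "\<lambda>g. f g (shift d t) (shift u t)"
  have "norm (?F (shift (\<lambda>\<tau>. ball_retract \<rho> (picard_limit \<tau>)) t) - ?F (shift (\<lambda>\<tau>. 0) t))
      \<le> (N R * h + M R) * \<delta> + c / 2 * exp (l * t)"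
    using delta R_pos
    by (intro f_shift_estimates(1)[OF R_pos hl t
        borel_measurable_ball_retract[OF rho_nonneg picard_limit_measurable] _
        AE_norm_retract_le_R _ norm_retract_picard_limit_le[OF assms] _ \<open>c \<ge> 0\<close> input_shift_R[OF t(1)]]) auto
  moreover have "norm (?F (\<lambda>s. 0)) \<le> b \<delta>"
    using input_shift_R[OF t(1)] u_small t by (intro norm_f_zero_le) auto
  moreover have "shift (\<lambda>\<tau>. 0 :: real ^ 'n) t = (\<lambda>s. 0)"
    by (simp add: shift_def)
  ultimately have "norm (picard_limit t) \<le> forcing + c / 2 * exp (l * t)"
    using elim t norm_triangle_ineq2[of "?F (shift (\<lambda>\<tau>. ball_retract \<rho> (picard_limit \<tau>)) t)" "?F (\<lambda>s. 0)"]
    by (simp add: picard_map_def forcing_def)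
  also have "\<dots> \<le> (c / 2 + forcing) * exp (l * t)"
    using exp_weight_ge[OF forcing_nonneg t(1)] by (simp add: algebra_simps)
  finally show ?case .
qed

lemma picard_limit_apriori:
  "AE \<tau> in lebesgue_on {0..<S}. norm (picard_limit \<tau>) \<le> 2 * forcing * exp (l * \<tau>)"
  by (rule AE_le_by_halving[OF picard_limit_bound_step picard_limit_le_a_R a_R_nonneg forcing_nonneg]) simp_all

lemma picard_limit_small: "AE \<tau> in lebesgue_on {-r..<S}. norm (picard_limit \<tau>) \<le> \<rho>"
proof -
  have "AE \<tau> in lebesgue_on {-r..<S}. \<tau> \<in> {0..<S} \<longrightarrow> norm (picard_limit \<tau>) \<le> 2 * forcing * exp (l * \<tau>)"
    by (rule AE_lebesgue_on_restrict[OF _ _ picard_limit_apriori]) auto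
  then show ?thesis
    using AE_lebesgue_on_mem
  proof eventually_elim
    case (elim \<tau>)
    show ?case
    proof (cases "\<tau> < 0")
      case False
      then have "norm (picard_limit \<tau>) \<le> 2 * forcing * exp (l * \<tau>)"
        using elim by auto
      also have "\<dots> \<le> 2 * forcing * exp (l * S)"
        using elim hl forcing_nonneg by (auto intro!: mult_left_mono)
      also have "\<dots> \<le> \<rho>"
        using forcing_small by (simp add: forcing_def)
      finally show ?thesis .
    qed (simp add: picard_limit_neg norm_ball_retract_le[OF rho_nonneg])
  qed
qed

lemma picard_limit_solution:
  shows "Linf_loc {-r..<S} UNIV picard_limit"
    and "AE t in lebesgue_on {0..<S}. picard_limit t = f (shift picard_limit t) (shift d t) (shift u t)"
    and "ae_eq {-r..<0} picard_limit x0"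
    and "\<And>t. 0 \<le> t \<Longrightarrow> t < S \<Longrightarrow> ess_norm {-r..<0} (shift picard_limit t) \<le> ereal \<rho>"
proof -
  show "Linf_loc {-r..<S} UNIV picard_limit"
    unfolding Linf_loc_def
  proof (intro conjI allI impI)
    fix p q assume sub: "{p..q} \<subseteq> {-r..<S}"
    have "picard_limit \<in> borel_measurable (lebesgue_on {p..q})"
      by (rule measurable_restrict_mono[OF picard_limit_measurable sub])
    moreover have "AE \<tau> in lebesgue_on {p..q}. norm (picard_limit \<tau>) \<le> \<rho>"
      by (rule AE_lebesgue_on_subset[OF _ _ picard_limit_small sub]) auto
    ultimately show "ess_norm {p..q} picard_limit < \<infinity>"
      using Linf_if_AE_bounded unfolding Linf_def by blast
  qed (simp_all add: picard_limit_measurable)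
  note history = Linf_shift[OF picard_limit_measurable picard_limit_small]
  show "ess_norm {-r..<0} (shift picard_limit t) \<le> ereal \<rho>" if "0 \<le> t" "t < S" for t
    using history[OF that] by (simp add: Linf_def ess_norm_le_ereal)
  show "ae_eq {-r..<0} picard_limit x0"
    unfolding ae_eq_def using x0_small AE_lebesgue_on_mem
  proof eventually_elim
    case (elim \<tau>)
    then show ?case
      using picard_limit_neg delta ball_retract_id[of "x0 \<tau>" \<rho>] by auto
  qed
  show "AE t in lebesgue_on {0..<S}. picard_limit t = f (shift picard_limit t) (shift d t) (shift u t)"
    using picard_limit_eq_picard_map AE_lebesgue_on_mem
  proof eventually_elim
    case (elim t)
    then have t: "0 \<le> t" "t < S" by auto
    have "AE s in lebesgue_on {-r..<0}.
        t + s \<in> {-r..<S} \<longrightarrow> ball_retract \<rho> (picard_limit (t + s)) = picard_limit (t + s)"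
      using picard_limit_small by (intro AE_lebesgue_on_translate) (auto elim!: AE_mp intro: ball_retract_id)
    then have "ae_eq {-r..<0} (shift (\<lambda>\<tau>. ball_retract \<rho> (picard_limit \<tau>)) t) (shift picard_limit t)"
      unfolding ae_eq_def using AE_lebesgue_on_mem
      by eventually_elim (use t in \<open>auto simp: shift_def\<close>)
    then have "f (shift (\<lambda>\<tau>. ball_retract \<rho> (picard_limit \<tau>)) t) (shift d t) (shift u t)
        = f (shift picard_limit t) (shift d t) (shift u t)"
      using Linf_shift(1)[OF borel_measurable_ball_retract[OF rho_nonneg picard_limit_measurable]
          AE_norm_retract_le_R t] history(1)[OF t] input_shift_R[OF t(1)]
      by (intro f_welldef) (simp_all add: ae_eq_def)
    then show ?case
      using elim t by (simp add: picard_map_def)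
  qed
qed

lemma picard_limit_delay_solution: "delay_solution r f d u x0 (ereal S) picard_limit"
  using picard_limit_solution(1-3) by (simp add: delay_solution_ereal_iff)

lemma delay_solution_unique:
  assumes "delay_solution r f d u x0 (ereal S) y"
  shows "ae_eq {t. -r \<le> t \<and> ereal t < ereal S} y picard_limit"
proof -
  have inputs: "Linf {-r..0} D (shift d t) \<and> Linf {-r..0} U (shift u t) \<and>
      (AE s in lebesgue_on {-r..0}. norm (shift d t s, shift u t s) \<le> R)" if "0 \<le> t" for t
    using input_shift_R[OF that] by blast
  have "Linf_loc {-r..<S} UNIV y" "ae_eq {-r..<0} y x0"
    "AE t in lebesgue_on {0..<S}. y t = f (shift y t) (shift d t) (shift u t)"
    using assms by (simp_all add: delay_solution_ereal_iff)
  then show ?thesis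
    using solutions_agree[OF S_pos _ inputs _ picard_limit_solution(1) _ picard_limit_solution(2)
        _ picard_limit_solution(3)] R_pos
    unfolding Collect_ereal_less_eq by simp
qed

end

lemma ess_norm_initial_input_le:
  fixes x0 :: "real \<Rightarrow> 'a::real_normed_vector" and u :: "real \<Rightarrow> 'b::real_normed_vector"
  assumes "r > 0"
    and small: "ess_norm {-r..<0} x0 + (SUP t\<in>{0..}. ess_norm {-r..0} (shift u t)) < ereal \<delta>"
  shows "ess_norm {-r..<0} x0 \<le> ereal \<delta>" "\<And>t. t \<ge> 0 \<Longrightarrow> ess_norm {-r..0} (shift u t) \<le> ereal \<delta>"
proof -
  define Su where "Su = (SUP t\<in>{0..}. ess_norm {-r..0} (shift u t))"
  have u_le: "ess_norm {-r..0} (shift u t) \<le> Su" if "t \<ge> 0" for t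
    unfolding Su_def by (rule SUP_upper) (use that in auto)
  have "0 \<le> ess_norm {-r..0} (shift u 0)" "0 \<le> ess_norm {-r..<0} x0"
    using \<open>r > 0\<close> by (auto intro: ess_norm_nonneg)
  then have "ess_norm {-r..<0} x0 \<le> ess_norm {-r..<0} x0 + Su" "Su \<le> ess_norm {-r..<0} x0 + Su"
    using u_le[of 0] by (auto intro: add_increasing add_increasing2)
  then have "ess_norm {-r..<0} x0 \<le> ereal \<delta>" "Su \<le> ereal \<delta>"
    using small unfolding Su_def[symmetric] by simp_all
  then show "ess_norm {-r..<0} x0 \<le> ereal \<delta>" "\<And>t. t \<ge> 0 \<Longrightarrow> ess_norm {-r..0} (shift u t) \<le> ereal \<delta>"
    using u_le order.trans by blast+
qed

context delay_system
begin

lemma small_data_params: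
  assumes "\<rho> > 0" "Dm \<ge> 0"
  obtains \<delta> R h l where "\<delta> > 0" "\<delta> \<le> \<rho>" "\<rho> \<le> R" "Dm + \<delta> \<le> R"
    "0 < h" "h < r" "N R * h \<le> 1/4" "l \<ge> 0" "M R * exp (- (l * h)) \<le> 1/4"
    "2 * ((N R * h + M R) * \<delta> + b \<delta>) * exp (l * S) \<le> \<rho>"
proof -
  define R where "R = \<rho> + Dm + 1"
  have "R > 0"
    using assms by (simp add: R_def)
  obtain h l where hl: "0 < h" "h < r" "N R * h \<le> 1/4" "l \<ge> 0" "M R * exp (- (l * h)) \<le> 1/4"
    using contraction_params[OF \<open>R > 0\<close>] by blast
  define E where "E = exp (l * S)"
  define K where "K = N R * h + M R"
  have "E > 0" "K \<ge> 0"
    using aMN_nonneg \<open>R > 0\<close> hl by (simp_all add: E_def K_def)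
  obtain \<delta>1 where "\<delta>1 > 0" and b_le: "\<And>x. 0 \<le> x \<Longrightarrow> x < \<delta>1 \<Longrightarrow> b x < \<rho> / (4 * E)"
    using b_small[of "\<rho> / (4 * E)"] \<open>\<rho> > 0\<close> \<open>E > 0\<close> by auto
  define \<delta> where "\<delta> = min (\<delta>1 / 2) (min 1 (min \<rho> (\<rho> / (4 * E * (K + 1)))))"
  have \<delta>: "\<delta> > 0" "\<delta> \<le> 1" "\<delta> \<le> \<rho>" "\<delta> < \<delta>1" "\<delta> \<le> \<rho> / (4 * E * (K + 1))"
    using \<open>\<delta>1 > 0\<close> \<open>\<rho> > 0\<close> \<open>E > 0\<close> \<open>K \<ge> 0\<close> by (auto simp: \<delta>_def)
  have "K * \<delta> \<le> K * (\<rho> / (4 * E * (K + 1)))"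
    using \<open>K \<ge> 0\<close> \<delta> by (intro mult_left_mono) auto
  also have "\<dots> = (\<rho> / (4 * E)) * (K / (K + 1))"
    using \<open>K \<ge> 0\<close> by (simp add: field_simps)
  also have "\<dots> \<le> \<rho> / (4 * E)"
    using \<open>K \<ge> 0\<close> \<open>\<rho> > 0\<close> \<open>E > 0\<close> by (intro mult_left_le) auto
  finally have "2 * (K * \<delta> + b \<delta>) * E \<le> \<rho>"
    using b_le[of \<delta>] \<delta> \<open>E > 0\<close> by (simp add: field_simps)
  then show ?thesis
    using that[of \<delta> R h l] \<delta> hl assms by (simp add: R_def E_def K_def)
qed

lemma zero_robust_equilibrium: "robust_equilibrium_zero r D U f"
  unfolding robust_equilibrium_zero_def
proof (intro allI impI, goal_cases)
  case (1 \<epsilon> T)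
  obtain Dm where Dm: "\<forall>v\<in>D. norm v \<le> Dm" "Dm \<ge> 0"
    using D_bounded by (meson bounded_pos less_imp_le)
  define S where "S = T + 1"
  obtain \<delta> R h l where params: "\<delta> > 0" "\<delta> \<le> \<epsilon> / 2" "\<epsilon> / 2 \<le> R" "Dm + \<delta> \<le> R"
    "0 < h" "h < r" "N R * h \<le> 1/4" "l \<ge> 0" "M R * exp (- (l * h)) \<le> 1/4"
    "2 * ((N R * h + M R) * \<delta> + b \<delta>) * exp (l * S) \<le> \<epsilon> / 2"
    using small_data_params[OF half_gt_zero[OF \<open>\<epsilon> > 0\<close>] Dm(2), where S=S] by blast
  show ?case
  proof (intro exI[of _ \<delta>] conjI allI impI, goal_cases)
    case (2 x0 d u)
    then have x0: "Linf {-r..<0} UNIV x0" and d: "Linf {-r..} D d" and u: "Linf_loc {-r..} U u"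
      and x0_small: "ess_norm {-r..<0} x0 \<le> ereal \<delta>"
      and u_small: "\<And>t. t \<ge> 0 \<Longrightarrow> ess_norm {-r..0} (shift u t) \<le> ereal \<delta>"
      using ess_norm_initial_input_le r_pos by blast+
    interpret p: picard_setting r D U f a M N b x0 d u "\<epsilon> / 2" \<delta> Dm R h l S
      using params \<open>\<epsilon> > 0\<close> \<open>T \<ge> 0\<close> Dm x0 d u u_small AE_norm_le_if_ess_norm_le[OF x0_small]
      by unfold_locales (auto simp: S_def)
    have "ess_norm {-r..<0} (shift p.picard_limit t) < ereal \<epsilon>" if "t \<in> {0..T}" for t
    proof -
      have "ess_norm {-r..<0} (shift p.picard_limit t) \<le> ereal (\<epsilon> / 2)"
        using p.picard_limit_solution(4)[of t] that by (simp add: S_def)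
      also have "\<dots> < ereal \<epsilon>"
        using \<open>\<epsilon> > 0\<close> by simp
      finally show ?thesis .
    qed
    then show ?case
      using p.picard_limit_delay_solution p.delay_solution_unique
      by (intro exI[of _ "ereal S"] conjI exI[of _ p.picard_limit]) (auto simp: S_def)
  qed (use params in simp)
qed
end

theorem theorem2p2:
  fixes r :: real
    and D :: "(real ^ 'm1) set" and U :: "(real ^ 'm2) set"
    and f :: "(real \<Rightarrow> real ^ 'n) \<Rightarrow> (real \<Rightarrow> real ^ 'm1) \<Rightarrow> (real \<Rightarrow> real ^ 'm2) \<Rightarrow> real ^ 'n"
  assumes r_pos: "r > 0"
    and D_compact: "compact D"
    and U_lc: "locally compact U"
    and U0: "0 \<in> U"
    and f_welldef: "\<And>x x' d d' u u'.
        Linf {-r..<0} UNIV x \<Longrightarrow> Linf {-r..<0} UNIV x' \<Longrightarrow>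
        Linf {-r..0} D d \<Longrightarrow> Linf {-r..0} D d' \<Longrightarrow>
        Linf {-r..0} U u \<Longrightarrow> Linf {-r..0} U u' \<Longrightarrow>
        ae_eq {-r..<0} x x' \<Longrightarrow> ae_eq {-r..0} d d' \<Longrightarrow> ae_eq {-r..0} u u' \<Longrightarrow>
        f x d u = f x' d' u'"
    and H1: "\<exists>a M N :: real \<Rightarrow> real.
        mono_on {0..} a \<and> mono_on {0..} M \<and> mono_on {0..} N \<and>
        (\<forall>s\<ge>0. a s \<ge> 0 \<and> M s \<ge> 0 \<and> N s \<ge> 0) \<and>
        (\<forall>R>0. \<forall>x y d u.
          Linf {-r..<0} UNIV x \<and> Linf {-r..<0} UNIV y \<and> Linf {-r..0} D d \<and> Linf {-r..0} U u \<and>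
          ess_norm {-r..<0} x \<le> ereal R \<and> ess_norm {-r..<0} y \<le> ereal R \<and>
          ess_norm {-r..0} (\<lambda>s. (d s, u s)) \<le> ereal R \<longrightarrow>
            (\<forall>h. 0 < h \<and> h < r \<longrightarrow>
               ereal (norm (f x d u - f y d u))
                 \<le> ereal (N R * h) * ess_norm {-h..<0} (\<lambda>s. x s - y s)
                   + ereal (M R) * ess_norm {-r..<-h} (\<lambda>s. x s - y s)) \<and>
            norm (f x d u) \<le> a R)"
    and H2: "\<And>\<delta> x d u. \<delta> > 0 \<Longrightarrow> Linf {-r..<\<delta>} UNIV x \<Longrightarrow>
        Linf {-r..\<delta>} D d \<Longrightarrow> Linf {-r..\<delta>} U u \<Longrightarrow>
        Linf {-r..<\<delta>} UNIV
          (\<lambda>t. if t < 0 then x t else f (shift x t) (shift d t) (shift u t))"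
    and H3: "\<exists>b. K_inf b \<and>
        (\<forall>x d u. Linf {-r..<0} UNIV x \<and> Linf {-r..0} D d \<and> Linf {-r..0} U u \<longrightarrow>
           norm (f x d u)
             \<le> b (real_of_ereal (max (ess_norm {-r..<0} x) (ess_norm {-r..0} u))))"
  shows "\<forall>\<epsilon>>0. \<forall>T\<ge>0. \<exists>\<delta>>0. \<forall>x0 d u.
     Linf {-r..<0} UNIV x0 \<and> Linf {-r..} D d \<and> Linf_loc {-r..} U u \<and>
     ess_norm {-r..<0} x0 + (SUP t\<in>{0..}. ess_norm {-r..0} (shift u t)) < ereal \<delta> \<longrightarrow>
     (\<exists>tmax :: ereal. tmax > ereal T \<and>
        (\<exists>x. Linf_loc {t. -r \<le> t \<and> ereal t < tmax} UNIV x \<and>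
             (AE t in lebesgue_on {t. 0 \<le> t \<and> ereal t < tmax}.
                x t = f (shift x t) (shift d t) (shift u t)) \<and>
             ae_eq {-r..<0} x x0 \<and>
             (\<forall>t\<in>{0..T}. ess_norm {-r..<0} (shift x t) < ereal \<epsilon>) \<and>
             (\<forall>y. Linf_loc {t. -r \<le> t \<and> ereal t < tmax} UNIV y \<and>
                  (AE t in lebesgue_on {t. 0 \<le> t \<and> ereal t < tmax}.
                     y t = f (shift y t) (shift d t) (shift u t)) \<and>
                  ae_eq {-r..<0} y x0 \<longrightarrow>
                  ae_eq {t. -r \<le> t \<and> ereal t < tmax} y x)))"
proof -
  have "\<exists>a M N b. delay_system r D U f a M N b"
    using H1 H3 r_pos compact_imp_bounded[OF D_compact] f_welldef H2
    unfolding delay_system_def by blast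
  then obtain a M N b where "delay_system r D U f a M N b"
    by blast
  then interpret delay_system r D U f a M N b .
  show ?thesis
    using zero_robust_equilibrium
    unfolding robust_equilibrium_zero_def delay_solution_def by (simp only: conj_assoc)
qed

end
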